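(* Let $n\geqslant 1$ and let $T$ be a basic tree with $2n$ vertices. Let $D$ be the directed graph obtained from $T$ by replacing every edge $ab$ of $T$ by the two directed edges $\overrightarrow{ab}$ and $\overrightarrow{ba}$. Then $\Delta(D)$ is homotopy equivalent to the sphere $\mathbb{S}^{n-1}$.
   Context: A basic tree is either a tree with exactly two vertices, or a tree with $2n$ vertices, $n$ of which are leaves and $n$ non-leaves, such that every non-leaf is adjacent to exactly one leaf. For a finite directed graph $D$, $\Delta(D)$ has the directed edges of $D$ as vertices and the edge sets of directed forests in $D$ (vertex-disjoint unions of rooted directed trees; equivalently, edge sets in which every vertex has in-degree at most $1$ and there is no directed cycle) as faces. *)

theory Defs
  imports "HOL-Analysis.Analysis"
begin

definition simple_graph :: "'a set \<Rightarrow> 'a set set \<Rightarrow> bool" where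
  "simple_graph V E \<longleftrightarrow> finite V \<and>
     (\<forall>e\<in>E. \<exists>a b. e = {a, b} \<and> a \<noteq> b \<and> a \<in> V \<and> b \<in> V)"

definition adj :: "'a set set \<Rightarrow> 'a \<Rightarrow> 'a \<Rightarrow> bool" where
  "adj E a b \<longleftrightarrow> {a, b} \<in> E \<and> a \<noteq> b"

definition graph_connected :: "'a set \<Rightarrow> 'a set set \<Rightarrow> bool" where
  "graph_connected V E \<longleftrightarrow>
     (\<forall>a\<in>V. \<forall>b\<in>V. (a, b) \<in> {(x, y). adj E x y}\<^sup>*)"

definition is_cycle :: "'a set \<Rightarrow> 'a set set \<Rightarrow> 'a list \<Rightarrow> bool" where
  "is_cycle V E cs \<longleftrightarrow> length cs \<ge> 3 \<and> distinct cs \<and> set cs \<subseteq> V \<and>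
     (\<forall>i. Suc i < length cs \<longrightarrow> adj E (cs ! i) (cs ! Suc i)) \<and>
     adj E (last cs) (hd cs)"

definition is_tree :: "'a set \<Rightarrow> 'a set set \<Rightarrow> bool" where
  "is_tree V E \<longleftrightarrow> simple_graph V E \<and> V \<noteq> {} \<and> graph_connected V E \<and>
     \<not> (\<exists>cs. is_cycle V E cs)"

definition degree :: "'a set set \<Rightarrow> 'a \<Rightarrow> nat" where
  "degree E v = card {e\<in>E. v \<in> e}"

definition is_leaf :: "'a set set \<Rightarrow> 'a \<Rightarrow> bool" where
  "is_leaf E v \<longleftrightarrow> degree E v = 1"

definition basic_tree :: "'a set \<Rightarrow> 'a set set \<Rightarrow> bool" where
  "basic_tree V E \<longleftrightarrow> is_tree V E \<and>
     (card V = 2 \<or>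
      (\<exists>n. card V = 2 * n \<and> card {v\<in>V. is_leaf E v} = n \<and>
           card {v\<in>V. \<not> is_leaf E v} = n \<and>
           (\<forall>v\<in>V. \<not> is_leaf E v \<longrightarrow> card {u\<in>V. is_leaf E u \<and> adj E v u} = 1)))"

definition doubled_arcs :: "'a set set \<Rightarrow> ('a \<times> 'a) set" where
  "doubled_arcs E = {(a, b). adj E a b}"

definition directed_forest :: "('a \<times> 'a) set \<Rightarrow> ('a \<times> 'a) set \<Rightarrow> bool" where
  "directed_forest A F \<longleftrightarrow> F \<subseteq> A \<and>
     (\<forall>v. card {u. (u, v) \<in> F} \<le> 1) \<and> acyclic F"

text \<open>Geometric realization of the simplicial complex Delta(D): vertices are arcs,
  faces are directed forests; realized as the standard subspace of the product
  space of real-valued functions on arcs.\<close>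
definition forest_complex_realization :: "('a \<times> 'a) set \<Rightarrow> (('a \<times> 'a) \<Rightarrow> real) topology" where
  "forest_complex_realization A =
     subtopology (powertop_real UNIV)
       {x. (\<forall>e. 0 \<le> x e) \<and> directed_forest A {e. x e \<noteq> 0} \<and> sum x A = 1}"

end

theory Submission
  imports Defs
begin

text \<open>
  A basic tree with at least four vertices is the corona of the tree on its non-leaves W: each
  w \<in> W carries exactly one pendant leaf p w, so every arc of D ends in W or is an arc
  w \<rightarrow> p w. Attach to w the arc p w \<rightarrow> w on one side and, on the other, w \<rightarrow> p w together
  with the remaining arcs into w. A directed forest never contains p w \<rightarrow> w together with an
  arc of the other side (two arcs into w, or a 2-cycle). Hence for a point x of the realization
  the differences of the masses of the two sides form a nonzero vector of \<real>^n, which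
  normalised is a point of the sphere. Conversely a point y of the sphere gives the point of the
  realization with mass proportional to the positive part of y w on w \<rightarrow> p w and to its
  negative part on p w \<rightarrow> w. Going around through the realization is the identity of the
  sphere; going around through the sphere is homotopic to the identity along straight lines,
  because adding to the support of x the arcs w \<rightarrow> p w of positive difference keeps it a forest.
\<close>

lemma directed_forest_iff:
  assumes "finite A"
  shows "directed_forest A F \<longleftrightarrow>
    F \<subseteq> A \<and> acyclic F \<and> (\<forall>u u' v. (u, v) \<in> F \<longrightarrow> (u', v) \<in> F \<longrightarrow> u = u')"
proof -
  have "card {u. (u, v) \<in> F} \<le> 1 \<longleftrightarrow> (\<forall>u u'. (u, v) \<in> F \<longrightarrow> (u', v) \<in> F \<longrightarrow> u = u')"
    if "F \<subseteq> A" for v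
  proof -
    have "finite ((\<lambda>u. (u, v)) -` F)"
      using finite_subset[OF that assms] by (rule finite_vimageI) (simp add: inj_on_def)
    then have fin: "finite {u. (u, v) \<in> F}"
      by (simp add: vimage_def)
    have "card {u. (u, v) \<in> F} \<le> 1 \<longleftrightarrow> (\<forall>a\<in>{u. (u, v) \<in> F}. \<forall>b\<in>{u. (u, v) \<in> F}. a = b)"
      using card_le_Suc0_iff_eq[OF fin] by simp
    then show ?thesis
      by simp
  qed
  then show ?thesis
    unfolding directed_forest_def by meson
qed

lemma directed_forest_subset:
  assumes "directed_forest A F" "finite A" "G \<subseteq> F"
  shows "directed_forest A G"
proof -
  have "F \<subseteq> A" "acyclic F" and in_unique: "\<forall>u u' v. (u, v) \<in> F \<longrightarrow> (u', v) \<in> F \<longrightarrow> u = u'"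
    using assms(1) unfolding directed_forest_iff[OF assms(2)] by auto
  have "G \<subseteq> A"
    using assms(3) \<open>F \<subseteq> A\<close> by (rule subset_trans)
  moreover have "acyclic G"
    using \<open>acyclic F\<close> assms(3) by (rule acyclic_subset)
  moreover have "\<forall>u u' v. (u, v) \<in> G \<longrightarrow> (u', v) \<in> G \<longrightarrow> u = u'"
    using in_unique assms(3) by blast
  ultimately show ?thesis
    unfolding directed_forest_iff[OF assms(2)] by blast
qed

lemma acyclic_bipartite:
  assumes "R \<subseteq> X \<times> Y" "X \<inter> Y = {}"
  shows "acyclic R"
proof -
  have "trans R"
    using assms unfolding trans_def by blast
  then show ?thesis
    using assms by (auto simp: acyclic_def trancl_id)
qed

lemma acyclic_Un_sinks:
  assumes "acyclic R" and "\<And>a b c. (a, b) \<in> S \<Longrightarrow> (b, c) \<notin> R \<union> S"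
  shows "acyclic (R \<union> S)"
proof -
  have path: "(x, y) \<in> R\<^sup>+ \<or> y \<in> Range S" if "(x, y) \<in> (R \<union> S)\<^sup>+" for x y
    using that
  proof (induction rule: trancl_induct)
    case (step y z)
    then have "y \<notin> Range S"
      using assms(2) by blast
    then show ?case
      using step by (auto intro: trancl_into_trancl)
  qed auto
  show ?thesis
    unfolding acyclic_def
  proof (intro allI notI)
    fix v
    assume cycle: "(v, v) \<in> (R \<union> S)\<^sup>+"
    show False
    proof (cases "v \<in> Range S")
      case True
      then show False
        using tranclD[OF cycle] assms(2) by blast
    next
      case False
      then show False
        using path[OF cycle] assms(1) by (auto simp: acyclic_def)
    qed
  qed
qed

lemma adj_sym: "adj E u v \<Longrightarrow> adj E v u"
  unfolding adj_def by (auto simp: insert_commute)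

lemma adj_in_vertices:
  assumes "simple_graph V E" "adj E u v"
  shows "u \<in> V" "v \<in> V"
  using assms unfolding simple_graph_def adj_def by (metis insert_iff singletonD)+

lemma leaf_unique_neighbour:
  assumes "simple_graph V E" "is_leaf E v"
  shows "\<exists>!u. adj E v u"
proof -
  obtain e where e: "{e \<in> E. v \<in> e} = {e}"
    using assms(2) card_1_singletonE unfolding is_leaf_def degree_def by blast
  then have "e \<in> E" "v \<in> e"
    by auto
  obtain a b where ab: "e = {a, b}" "a \<noteq> b"
    using assms(1) \<open>e \<in> E\<close> unfolding simple_graph_def by blast
  define u where "u = (if v = a then b else a)"
  have u: "e = {v, u}" "u \<noteq> v"
    using ab \<open>v \<in> e\<close> by (auto simp: u_def insert_commute)
  have "adj E v u"
    using \<open>e \<in> E\<close> u unfolding adj_def by auto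
  moreover have "u' = u" if "adj E v u'" for u'
  proof -
    have "{v, u'} \<in> {e \<in> E. v \<in> e}"
      using that unfolding adj_def by simp
    then have "{v, u'} = {v, u}"
      using e u by simp
    then show ?thesis
      using that by (auto simp: adj_def doubleton_eq_iff)
  qed
  ultimately show ?thesis
    by blast
qed

lemma connected_adjacent_leaves:
  assumes "simple_graph V E" "graph_connected V E" "v \<in> V"
    and "is_leaf E u" "is_leaf E v" "adj E u v"
  shows "V \<subseteq> {u, v}"
proof
  fix z
  assume "z \<in> V"
  then have "(v, z) \<in> {(x, y). adj E x y}\<^sup>*"
    using assms(2,3) unfolding graph_connected_def by blast
  then show "z \<in> {u, v}"
  proof (induction rule: rtrancl_induct)
    case (step y z)
    have yz: "adj E y z"
      using step by simp
    from step.IH show ?case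
    proof
      assume "y = u"
      then have "z = v"
        using leaf_unique_neighbour[OF assms(1,4)] yz assms(6) by blast
      then show ?case by simp
    next
      assume "y \<in> {v}"
      then have "z = u"
        using leaf_unique_neighbour[OF assms(1,5)] yz adj_sym[OF assms(6)] by blast
      then show ?case by simp
    qed
  qed simp
qed

text \<open>
  Edges inside W are
  arbitrary.
\<close>

locale corona =
  fixes V :: "'a set" and E :: "'a set set" and W :: "'a set" and p :: "'a \<Rightarrow> 'a"
    and n :: nat and \<nu> :: "nat \<Rightarrow> 'a"
  assumes simple: "simple_graph V E"
    and core_subset: "W \<subseteq> V"
    and n_pos: "n \<ge> 1"
    and enum_core: "bij_betw \<nu> {..<n} W"
    and partner_in: "\<And>v. v \<in> V \<Longrightarrow> p v \<in> V"
    and partner_partner: "\<And>v. v \<in> V \<Longrightarrow> p (p v) = v"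
    and adj_partner: "\<And>v. v \<in> V \<Longrightarrow> adj E v (p v)"
    and core_iff_partner: "\<And>v. v \<in> V \<Longrightarrow> v \<in> W \<longleftrightarrow> p v \<notin> W"
    and pendant_neighbour: "\<And>u v. v \<in> V \<Longrightarrow> v \<notin> W \<Longrightarrow> adj E u v \<Longrightarrow> u = p v"
begin

abbreviation arcs :: "('a \<times> 'a) set" where
  "arcs \<equiv> doubled_arcs E"

lemma arcs_iff: "(u, v) \<in> arcs \<longleftrightarrow> adj E u v"
  by (simp add: doubled_arcs_def)

lemma arcs_sym: "(u, v) \<in> arcs \<Longrightarrow> (v, u) \<in> arcs"
  by (simp add: arcs_iff adj_sym)

lemma finite_arcs: "finite arcs"
proof -
  have "finite V"
    using simple by (simp add: simple_graph_def)
  moreover have "arcs \<subseteq> V \<times> V"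
    using adj_in_vertices[OF simple] by (auto simp: doubled_arcs_def)
  ultimately show ?thesis
    using finite_subset by blast
qed

lemma nu_in_core: "i < n \<Longrightarrow> \<nu> i \<in> W"
  using bij_betw_apply[OF enum_core] by simp

lemma nu_in_V: "i < n \<Longrightarrow> \<nu> i \<in> V"
  using nu_in_core core_subset by blast

lemma nu_eq_iff: "i < n \<Longrightarrow> j < n \<Longrightarrow> \<nu> i = \<nu> j \<longleftrightarrow> i = j"
  using bij_betw_imp_inj_on[OF enum_core] by (auto dest: inj_onD)

lemma core_enumerated:
  assumes "w \<in> W"
  obtains i where "i < n" "\<nu> i = w"
  using assms enum_core by (force simp: bij_betw_def)

lemma partner_not_in_core: "w \<in> W \<Longrightarrow> p w \<notin> W"
  using core_iff_partner core_subset by blast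

lemma partner_nu_neq_nu: "i < n \<Longrightarrow> j < n \<Longrightarrow> p (\<nu> i) \<noteq> \<nu> j"
  using nu_in_core partner_not_in_core by metis

lemma in_neighbour_of_pendant: "(u, v) \<in> arcs \<Longrightarrow> v \<notin> W \<Longrightarrow> u = p v"
  using pendant_neighbour adj_in_vertices[OF simple] by (auto simp: arcs_iff)

lemma arc_into_partner:
  assumes "i < n" "(b, p (\<nu> i)) \<in> arcs"
  shows "b = \<nu> i"
proof -
  have "b = p (p (\<nu> i))"
    using assms in_neighbour_of_pendant nu_in_core partner_not_in_core by blast
  then show ?thesis
    using assms(1) nu_in_V partner_partner by simp
qed

definition out_arc :: "nat \<Rightarrow> 'a \<times> 'a" where
  "out_arc i = (\<nu> i, p (\<nu> i))"

definition in_arc :: "nat \<Rightarrow> 'a \<times> 'a" where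
  "in_arc i = (p (\<nu> i), \<nu> i)"

lemma out_arc_in_arcs: "i < n \<Longrightarrow> out_arc i \<in> arcs"
  using adj_partner nu_in_V by (simp add: out_arc_def arcs_iff)

lemma in_arc_in_arcs: "i < n \<Longrightarrow> in_arc i \<in> arcs"
  using adj_sym[OF adj_partner[OF nu_in_V]] by (simp add: in_arc_def arcs_iff)

lemma out_arc_eq_iff: "i < n \<Longrightarrow> j < n \<Longrightarrow> out_arc i = out_arc j \<longleftrightarrow> i = j"
  by (auto simp: out_arc_def nu_eq_iff)

lemma in_arc_eq_iff: "i < n \<Longrightarrow> j < n \<Longrightarrow> in_arc i = in_arc j \<longleftrightarrow> i = j"
  by (auto simp: in_arc_def nu_eq_iff)

lemma out_arc_neq_in_arc: "i < n \<Longrightarrow> j < n \<Longrightarrow> out_arc i \<noteq> in_arc j"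
  using partner_nu_neq_nu by (simp add: out_arc_def in_arc_def)

definition arcs_into :: "nat \<Rightarrow> ('a \<times> 'a) set" where
  "arcs_into i = {e \<in> arcs. snd e = \<nu> i}"

lemma arcs_decomposition: "arcs = (\<Union>i<n. insert (out_arc i) (arcs_into i))"
proof (intro equalityI subsetI)
  fix e
  assume "e \<in> arcs"
  then obtain u v where e: "e = (u, v)" "(u, v) \<in> arcs"
    by (cases e) auto
  show "e \<in> (\<Union>i<n. insert (out_arc i) (arcs_into i))"
  proof (cases "v \<in> W")
    case True
    then obtain i where "i < n" "\<nu> i = v"
      by (rule core_enumerated)
    then show ?thesis
      using e by (auto simp: arcs_into_def)
  next
    case False
    then have "u = p v"
      using e in_neighbour_of_pendant by blast
    moreover have "v \<in> V"
      using e adj_in_vertices[OF simple] by (auto simp: arcs_iff)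
    ultimately have "u \<in> W" "p u = v"
      using False core_iff_partner partner_partner by auto
    then obtain i where "i < n" "\<nu> i = u"
      by (elim core_enumerated)
    then show ?thesis
      using e \<open>p u = v\<close> by (auto simp: out_arc_def)
  qed
qed (auto simp: arcs_into_def out_arc_in_arcs)

definition pos_mass :: "('a \<times> 'a \<Rightarrow> real) \<Rightarrow> nat \<Rightarrow> real" where
  "pos_mass x i = x (out_arc i) + sum x (arcs_into i - {in_arc i})"

definition neg_mass :: "('a \<times> 'a \<Rightarrow> real) \<Rightarrow> nat \<Rightarrow> real" where
  "neg_mass x i = x (in_arc i)"

lemma sum_arcs: "sum x arcs = (\<Sum>i<n. pos_mass x i + neg_mass x i)"
proof -
  have finite_into: "finite (arcs_into i)" for i
    using finite_arcs by (simp add: arcs_into_def)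
  have disjoint: "insert (out_arc i) (arcs_into i) \<inter> insert (out_arc j) (arcs_into j) = {}"
    if "i < n" "j < n" "i \<noteq> j" for i j
    using that nu_eq_iff partner_nu_neq_nu by (auto simp: out_arc_def arcs_into_def)
  have "sum x arcs = (\<Sum>i<n. sum x (insert (out_arc i) (arcs_into i)))"
    unfolding arcs_decomposition using disjoint finite_into by (subst sum.UNION_disjoint) auto
  also have "\<dots> = (\<Sum>i<n. pos_mass x i + neg_mass x i)"
  proof (rule sum.cong)
    fix i
    assume "i \<in> {..<n}"
    then have "out_arc i \<notin> arcs_into i" "in_arc i \<in> arcs_into i"
      using partner_nu_neq_nu in_arc_in_arcs by (auto simp: out_arc_def in_arc_def arcs_into_def)
    then show "sum x (insert (out_arc i) (arcs_into i)) = pos_mass x i + neg_mass x i"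
      using finite_into by (simp add: pos_mass_def neg_mass_def sum.remove)
  qed simp
  finally show ?thesis .
qed

lemma pos_mass_eq_0_if_neg_mass:
  assumes forest: "directed_forest arcs {e. x e \<noteq> 0}" and "i < n" "neg_mass x i \<noteq> 0"
  shows "pos_mass x i = 0"
proof -
  have in_arc: "(p (\<nu> i), \<nu> i) \<in> {e. x e \<noteq> 0}"
    using assms(3) by (simp add: neg_mass_def in_arc_def)
  have "x (out_arc i) = 0"
  proof (rule ccontr)
    assume "x (out_arc i) \<noteq> 0"
    then have "(\<nu> i, p (\<nu> i)) \<in> {e. x e \<noteq> 0}\<^sup>+"
      by (simp add: out_arc_def r_into_trancl')
    then have "(\<nu> i, \<nu> i) \<in> {e. x e \<noteq> 0}\<^sup>+"
      using in_arc by (rule trancl_into_trancl)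
    then show False
      using forest by (simp add: directed_forest_def acyclic_def)
  qed
  moreover have "x e = 0" if e: "e \<in> arcs_into i - {in_arc i}" for e
  proof (rule ccontr)
    assume "x e \<noteq> 0"
    obtain u where u: "e = (u, \<nu> i)" "u \<noteq> p (\<nu> i)"
      using e by (cases e) (auto simp: arcs_into_def in_arc_def)
    have "\<forall>u u' v. (u, v) \<in> {e. x e \<noteq> 0} \<longrightarrow> (u', v) \<in> {e. x e \<noteq> 0} \<longrightarrow> u = u'"
      using forest unfolding directed_forest_iff[OF finite_arcs] by blast
    then show False
      using in_arc \<open>x e \<noteq> 0\<close> u by auto
  qed
  ultimately show ?thesis
    by (simp add: pos_mass_def)
qed

lemma directed_forest_in_arcs: "directed_forest arcs (in_arc ` {..<n})"
  unfolding directed_forest_iff[OF finite_arcs]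
proof (intro conjI allI impI)
  show "in_arc ` {..<n} \<subseteq> arcs"
    using in_arc_in_arcs by auto
  show "acyclic (in_arc ` {..<n})"
    by (rule acyclic_bipartite[of _ "V - W" W])
      (auto simp: in_arc_def nu_in_core nu_in_V partner_in partner_not_in_core)
next
  fix u u' v
  assume "(u, v) \<in> in_arc ` {..<n}" "(u', v) \<in> in_arc ` {..<n}"
  then show "u = u'"
    using nu_eq_iff by (auto simp: in_arc_def)
qed

text \<open>
  An out arc ends at a pendant vertex, whose only possible in-neighbour is its partner, so adding
  it keeps in-degrees at most one, and it closes a cycle only together with the reverse arc.
\<close>

lemma directed_forest_Un_out_arcs:
  assumes forest: "directed_forest arcs F" and I: "I \<subseteq> {..<n}" and "\<forall>i\<in>I. in_arc i \<notin> F"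
  shows "directed_forest arcs (F \<union> out_arc ` I)"
proof -
  have F: "F \<subseteq> arcs" "acyclic F" and in_unique: "\<forall>u u' v. (u, v) \<in> F \<longrightarrow> (u', v) \<in> F \<longrightarrow> u = u'"
    using forest unfolding directed_forest_iff[OF finite_arcs] by auto
  have out_arcs: "out_arc ` I \<subseteq> arcs"
    using I out_arc_in_arcs by auto
  have "acyclic (F \<union> out_arc ` I)"
  proof (rule acyclic_Un_sinks[OF F(2)])
    fix a b c
    assume "(a, b) \<in> out_arc ` I"
    then obtain i where i: "i \<in> I" "i < n" "b = p (\<nu> i)"
      using I by (auto simp: out_arc_def)
    show "(b, c) \<notin> F \<union> out_arc ` I"
    proof
      assume bc: "(b, c) \<in> F \<union> out_arc ` I"
      then have "c = \<nu> i"
        using i arc_into_partner arcs_sym F(1) out_arcs by blast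
      then have "(b, c) = in_arc i"
        using i by (simp add: in_arc_def)
      moreover have "in_arc i \<notin> out_arc ` I"
        using i(1) I out_arc_neq_in_arc by (metis imageE lessThan_iff subsetD)
      ultimately show False
        using bc i(1) assms(3) by auto
    qed
  qed
  moreover have "u = u'" if in_arcs: "(u, v) \<in> F \<union> out_arc ` I" "(u', v) \<in> F \<union> out_arc ` I" for u u' v
  proof (cases "(u, v) \<in> F \<and> (u', v) \<in> F")
    case True
    then show ?thesis
      using in_unique by blast
  next
    case False
    then obtain i where "i < n" "v = p (\<nu> i)" "u = \<nu> i \<or> u' = \<nu> i"
      using in_arcs I by (auto simp: out_arc_def)
    then show ?thesis
      using in_arcs arc_into_partner F(1) out_arcs by blast
  qed
  moreover have "F \<union> out_arc ` I \<subseteq> arcs"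
    using F(1) out_arcs by blast
  ultimately show ?thesis
    unfolding directed_forest_iff[OF finite_arcs] by blast
qed

definition points :: "('a \<times> 'a \<Rightarrow> real) set" where
  "points = {x. (\<forall>e. 0 \<le> x e) \<and> directed_forest arcs {e. x e \<noteq> 0} \<and> sum x arcs = 1}"

lemma realization_eq: "forest_complex_realization arcs = subtopology (powertop_real UNIV) points"
  by (simp add: forest_complex_realization_def points_def)

definition coord :: "('a \<times> 'a \<Rightarrow> real) \<Rightarrow> nat \<Rightarrow> real" where
  "coord x i = pos_mass x i - neg_mass x i"

lemma masses_nonneg:
  assumes "x \<in> points"
  shows "0 \<le> pos_mass x i" "0 \<le> neg_mass x i"
proof -
  have "0 \<le> x e" for e
    using assms unfolding points_def by blast
  then show "0 \<le> pos_mass x i" "0 \<le> neg_mass x i"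
    by (simp_all add: pos_mass_def neg_mass_def sum_nonneg)
qed

lemma pos_mass_or_neg_mass_eq_0:
  "x \<in> points \<Longrightarrow> i < n \<Longrightarrow> pos_mass x i = 0 \<or> neg_mass x i = 0"
  using pos_mass_eq_0_if_neg_mass by (auto simp: points_def)

lemma abs_coord: "x \<in> points \<Longrightarrow> i < n \<Longrightarrow> \<bar>coord x i\<bar> = pos_mass x i + neg_mass x i"
  using masses_nonneg[of x i] pos_mass_or_neg_mass_eq_0[of x i] by (auto simp: coord_def)

lemma sum_abs_coord: "x \<in> points \<Longrightarrow> (\<Sum>i<n. \<bar>coord x i\<bar>) = 1"
  using sum_arcs[of x] abs_coord by (simp add: points_def)

lemma L2_coord_pos:
  assumes "x \<in> points"
  shows "0 < L2_set (coord x) {..<n}"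
proof -
  have "L2_set (coord x) {..<n} \<noteq> 0"
  proof
    assume "L2_set (coord x) {..<n} = 0"
    then have "\<forall>i\<in>{..<n}. coord x i = 0"
      by (simp add: L2_set_eq_0_iff)
    then show False
      using sum_abs_coord[OF assms] by simp
  qed
  then show ?thesis
    using L2_set_nonneg[of "coord x" "{..<n}"] by linarith
qed

lemma in_sphere_iff:
  "y \<in> topspace (nsphere (n - 1)) \<longleftrightarrow> (\<Sum>i<n. (y i)\<^sup>2) = 1 \<and> (\<forall>i\<ge>n. y i = 0)"
proof -
  have "{..n - 1} = {..<n}" "\<And>i. n - 1 < i \<longleftrightarrow> n \<le> i"
    using n_pos by auto
  then show ?thesis
    by (simp add: nsphere)
qed

definition to_sphere :: "('a \<times> 'a \<Rightarrow> real) \<Rightarrow> nat \<Rightarrow> real" where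
  "to_sphere x i = (if i < n then coord x i / L2_set (coord x) {..<n} else 0)"

lemma to_sphere_in_sphere:
  assumes "x \<in> points"
  shows "to_sphere x \<in> topspace (nsphere (n - 1))"
proof -
  have "(\<Sum>i<n. (to_sphere x i)\<^sup>2) = (\<Sum>i<n. (coord x i)\<^sup>2) / (L2_set (coord x) {..<n})\<^sup>2"
    by (simp add: to_sphere_def power_divide sum_divide_distrib)
  also have "\<dots> = 1"
    using L2_coord_pos[OF assms] by (simp add: L2_set_def sum_nonneg)
  finally show ?thesis
    unfolding in_sphere_iff by (simp add: to_sphere_def)
qed

definition l1_norm :: "(nat \<Rightarrow> real) \<Rightarrow> real" where
  "l1_norm y = (\<Sum>i<n. \<bar>y i\<bar>)"

lemma l1_norm_pos:
  assumes "y \<in> topspace (nsphere (n - 1))"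
  shows "0 < l1_norm y"
proof -
  have "l1_norm y \<noteq> 0"
  proof
    assume "l1_norm y = 0"
    then have "\<forall>i\<in>{..<n}. y i = 0"
      by (simp add: l1_norm_def sum_nonneg_eq_0_iff)
    then show False
      using assms unfolding in_sphere_iff by simp
  qed
  moreover have "0 \<le> l1_norm y"
    by (simp add: l1_norm_def sum_nonneg)
  ultimately show ?thesis
    by simp
qed

definition from_sphere :: "(nat \<Rightarrow> real) \<Rightarrow> 'a \<times> 'a \<Rightarrow> real" where
  "from_sphere y e =
     (\<Sum>i<n. of_bool (e = out_arc i) * max (y i) 0 + of_bool (e = in_arc i) * max (- y i) 0)
       / l1_norm y"

lemma from_sphere_out_arc:
  assumes "i < n"
  shows "from_sphere y (out_arc i) = max (y i) 0 / l1_norm y"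
proof -
  have "(\<Sum>j<n. of_bool (out_arc i = out_arc j) * max (y j) 0
                  + of_bool (out_arc i = in_arc j) * max (- y j) 0)
      = (\<Sum>j<n. if i = j then max (y j) 0 else 0)"
    using assms by (intro sum.cong) (auto simp: out_arc_eq_iff out_arc_neq_in_arc)
  then show ?thesis
    using assms by (simp add: from_sphere_def)
qed

lemma from_sphere_in_arc:
  assumes "i < n"
  shows "from_sphere y (in_arc i) = max (- y i) 0 / l1_norm y"
proof -
  have "(\<Sum>j<n. of_bool (in_arc i = out_arc j) * max (y j) 0
                  + of_bool (in_arc i = in_arc j) * max (- y j) 0)
      = (\<Sum>j<n. if i = j then max (- y j) 0 else 0)"
    using assms by (intro sum.cong) (auto simp: in_arc_eq_iff out_arc_neq_in_arc[THEN not_sym])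
  then show ?thesis
    using assms by (simp add: from_sphere_def)
qed

lemma from_sphere_support:
  "{e. from_sphere y e \<noteq> 0} \<subseteq> out_arc ` {i. i < n \<and> 0 < y i} \<union> in_arc ` {i. i < n \<and> y i < 0}"
proof
  fix e
  assume "e \<in> {e. from_sphere y e \<noteq> 0}"
  then obtain i where "i < n"
    and "of_bool (e = out_arc i) * max (y i) 0 + of_bool (e = in_arc i) * max (- y i) 0 \<noteq> (0::real)"
    by (auto simp: from_sphere_def elim!: sum.not_neutral_contains_not_neutral)
  then show "e \<in> out_arc ` {i. i < n \<and> 0 < y i} \<union> in_arc ` {i. i < n \<and> y i < 0}"
    by (auto simp: max_def split: if_splits)
qed

lemma from_sphere_eq_0_into:
  assumes "i < n" "e \<in> arcs_into i - {in_arc i}"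
  shows "from_sphere y e = 0"
proof (rule ccontr)
  assume "from_sphere y e \<noteq> 0"
  then obtain j where "j < n" "e = out_arc j \<or> e = in_arc j"
    using from_sphere_support by blast
  then show False
    using assms partner_nu_neq_nu nu_eq_iff by (auto simp: arcs_into_def out_arc_def in_arc_def)
qed

lemma pos_mass_from_sphere: "i < n \<Longrightarrow> pos_mass (from_sphere y) i = max (y i) 0 / l1_norm y"
  using from_sphere_eq_0_into by (simp add: pos_mass_def from_sphere_out_arc)

lemma neg_mass_from_sphere: "i < n \<Longrightarrow> neg_mass (from_sphere y) i = max (- y i) 0 / l1_norm y"
  by (simp add: neg_mass_def from_sphere_in_arc)

lemma coord_from_sphere: "i < n \<Longrightarrow> coord (from_sphere y) i = y i / l1_norm y"
  by (simp add: coord_def pos_mass_from_sphere neg_mass_from_sphere max_def diff_divide_distrib[symmetric])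

lemma from_sphere_in_points:
  assumes y: "y \<in> topspace (nsphere (n - 1))"
  shows "from_sphere y \<in> points"
proof -
  have l1: "0 < l1_norm y"
    using l1_norm_pos[OF y] .
  have "0 \<le> from_sphere y e" for e
    using l1 by (simp add: from_sphere_def sum_nonneg)
  moreover have "sum (from_sphere y) arcs = 1"
  proof -
    have "sum (from_sphere y) arcs = (\<Sum>i<n. \<bar>y i\<bar> / l1_norm y)"
      unfolding sum_arcs
      by (intro sum.cong)
        (auto simp: pos_mass_from_sphere neg_mass_from_sphere max_def add_divide_distrib[symmetric])
    also have "\<dots> = 1"
      using l1 by (simp add: l1_norm_def sum_divide_distrib[symmetric])
    finally show ?thesis .
  qed
  moreover have "directed_forest arcs {e. from_sphere y e \<noteq> 0}"
  proof -
    let ?F = "in_arc ` {i. i < n \<and> y i < 0}"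
    have "directed_forest arcs ?F"
      by (rule directed_forest_subset[OF directed_forest_in_arcs finite_arcs]) auto
    moreover have "\<forall>i\<in>{i. i < n \<and> 0 < y i}. in_arc i \<notin> ?F"
      using in_arc_eq_iff by fastforce
    ultimately have "directed_forest arcs (?F \<union> out_arc ` {i. i < n \<and> 0 < y i})"
      by (intro directed_forest_Un_out_arcs) auto
    then show ?thesis
      using finite_arcs by (rule directed_forest_subset) (use from_sphere_support in blast)
  qed
  ultimately show ?thesis
    by (simp add: points_def)
qed

lemma to_sphere_from_sphere:
  assumes y: "y \<in> topspace (nsphere (n - 1))"
  shows "to_sphere (from_sphere y) = y"
proof
  fix i
  have l1: "0 < l1_norm y"
    using l1_norm_pos[OF y] .
  have sphere: "(\<Sum>i<n. (y i)\<^sup>2) = 1" "\<forall>i\<ge>n. y i = 0"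
    using y unfolding in_sphere_iff by auto
  have "L2_set (coord (from_sphere y)) {..<n} = L2_set (\<lambda>i. (1 / l1_norm y) * y i) {..<n}"
    by (rule L2_set_cong) (simp_all add: coord_from_sphere)
  also have "\<dots> = 1 / l1_norm y * L2_set y {..<n}"
    using L2_set_right_distrib[of "1 / l1_norm y" y "{..<n}"] l1 by simp
  also have "\<dots> = 1 / l1_norm y"
    using sphere by (simp add: L2_set_def)
  finally show "to_sphere (from_sphere y) i = y i"
    using l1 sphere by (simp add: to_sphere_def coord_from_sphere)
qed

lemma to_sphere_sign:
  assumes "x \<in> points" "i < n"
  shows "0 < to_sphere x i \<longleftrightarrow> 0 < coord x i" "to_sphere x i < 0 \<longleftrightarrow> coord x i < 0"
  using L2_coord_pos[OF assms(1)] assms(2)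
  by (simp_all add: to_sphere_def zero_less_divide_iff divide_less_0_iff)

lemma directed_forest_with_positive_out_arcs:
  assumes x: "x \<in> points"
  shows "directed_forest arcs ({e. x e \<noteq> 0} \<union> out_arc ` {i. i < n \<and> 0 < coord x i})"
proof (rule directed_forest_Un_out_arcs)
  show "directed_forest arcs {e. x e \<noteq> 0}"
    using x by (simp add: points_def)
  show "\<forall>i\<in>{i. i < n \<and> 0 < coord x i}. in_arc i \<notin> {e. x e \<noteq> 0}"
  proof
    fix i
    assume "i \<in> {i. i < n \<and> 0 < coord x i}"
    then have "i < n" "neg_mass x i < pos_mass x i"
      by (auto simp: coord_def)
    then have "neg_mass x i = 0"
      using pos_mass_or_neg_mass_eq_0[OF x] masses_nonneg(2)[OF x, of i] by force
    then show "in_arc i \<notin> {e. x e \<noteq> 0}"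
      by (simp add: neg_mass_def)
  qed
qed auto

lemma from_to_sphere_support:
  assumes x: "x \<in> points"
  shows "{e. from_sphere (to_sphere x) e \<noteq> 0}
    \<subseteq> {e. x e \<noteq> 0} \<union> out_arc ` {i. i < n \<and> 0 < coord x i}"
proof
  fix e
  assume "e \<in> {e. from_sphere (to_sphere x) e \<noteq> 0}"
  then consider (out) i where "i < n" "0 < to_sphere x i" "e = out_arc i"
    | (into) i where "i < n" "to_sphere x i < 0" "e = in_arc i"
    using from_sphere_support by blast
  then show "e \<in> {e. x e \<noteq> 0} \<union> out_arc ` {i. i < n \<and> 0 < coord x i}"
  proof cases
    case out
    then show ?thesis
      using to_sphere_sign[OF x] by auto
  next
    case into
    then have "pos_mass x i < neg_mass x i"
      using to_sphere_sign[OF x] by (simp add: coord_def)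
    then have "x (in_arc i) \<noteq> 0"
      using masses_nonneg(1)[OF x, of i] by (simp add: neg_mass_def)
    then show ?thesis
      using into by simp
  qed
qed

lemma segment_in_points:
  assumes x: "x \<in> points" and t: "0 \<le> t" "t \<le> 1"
  shows "(\<lambda>e. (1 - t) * from_sphere (to_sphere x) e + t * x e) \<in> points"
proof -
  let ?g = "from_sphere (to_sphere x)"
  have g: "?g \<in> points"
    using from_sphere_in_points to_sphere_in_sphere x by blast
  have "0 \<le> (1 - t) * ?g e + t * x e" for e
  proof -
    have "0 \<le> ?g e" "0 \<le> x e"
      using g x unfolding points_def by blast+
    then show ?thesis
      using t by simp
  qed
  moreover have "sum (\<lambda>e. (1 - t) * ?g e + t * x e) arcs = 1"
    using g x by (simp add: points_def sum.distrib sum_distrib_left[symmetric])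
  moreover have "{e. (1 - t) * ?g e + t * x e \<noteq> 0}
      \<subseteq> {e. x e \<noteq> 0} \<union> out_arc ` {i. i < n \<and> 0 < coord x i}"
    using from_to_sphere_support[OF x] by auto
  then have "directed_forest arcs {e. (1 - t) * ?g e + t * x e \<noteq> 0}"
    by (rule directed_forest_subset[OF directed_forest_with_positive_out_arcs[OF x] finite_arcs])
  ultimately show ?thesis
    by (simp add: points_def)
qed

lemma continuous_map_arc_value:
  "continuous_map (forest_complex_realization arcs) euclideanreal (\<lambda>x. x e)"
  unfolding realization_eq
  by (rule continuous_map_from_subtopology[OF continuous_map_product_projection]) simp

lemma continuous_map_into_realization:
  assumes "\<And>e. continuous_map X euclideanreal (\<lambda>z. f z e)"
    and "\<And>z. z \<in> topspace X \<Longrightarrow> f z \<in> points"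
  shows "continuous_map X (forest_complex_realization arcs) f"
  unfolding realization_eq continuous_map_in_subtopology
  using assms by (auto simp: continuous_map_componentwise_UNIV)

lemma continuous_map_coord:
  "continuous_map (forest_complex_realization arcs) euclideanreal (\<lambda>x. coord x i)"
proof -
  have "finite (arcs_into i - {in_arc i})"
    using finite_arcs by (simp add: arcs_into_def)
  then show ?thesis
    unfolding coord_def pos_mass_def neg_mass_def
    by (intro continuous_intros continuous_map_arc_value)
qed

lemma continuous_map_to_sphere:
  "continuous_map (forest_complex_realization arcs) (nsphere (n - 1)) to_sphere"
proof -
  have "continuous_map (forest_complex_realization arcs) euclideanreal (\<lambda>x. to_sphere x i)" for i
  proof (cases "i < n")
    case True
    have "sqrt (\<Sum>j<n. (coord x j)\<^sup>2) \<noteq> 0"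
      if "x \<in> topspace (forest_complex_realization arcs)" for x
      using L2_coord_pos[of x] that by (simp add: realization_eq L2_set_def)
    then have "continuous_map (forest_complex_realization arcs) euclideanreal
        (\<lambda>x. coord x i / L2_set (coord x) {..<n})"
      unfolding L2_set_def by (intro continuous_intros continuous_map_coord finite_lessThan)
    then show ?thesis
      using True by (simp add: to_sphere_def)
  next
    case False
    then show ?thesis
      by (simp add: to_sphere_def)
  qed
  then show ?thesis
    using to_sphere_in_sphere
    unfolding nsphere continuous_map_in_subtopology continuous_map_componentwise_UNIV
    by (auto simp: realization_eq)
qed

lemma continuous_map_from_sphere:
  "continuous_map (nsphere (n - 1)) (forest_complex_realization arcs) from_sphere"
proof (rule continuous_map_into_realization)
  fix e
  have "(\<Sum>i<n. \<bar>y i\<bar>) \<noteq> 0" if "y \<in> topspace (nsphere (n - 1))" for y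
    using l1_norm_pos[OF that] by (simp add: l1_norm_def)
  then show "continuous_map (nsphere (n - 1)) euclideanreal (\<lambda>y. from_sphere y e)"
    unfolding from_sphere_def l1_norm_def
    by (intro continuous_intros continuous_map_nsphere_projection finite_lessThan)
qed (rule from_sphere_in_points)

lemma continuous_map_straight_line_homotopy:
  "continuous_map (prod_topology (top_of_set {0..1}) (forest_complex_realization arcs))
     (forest_complex_realization arcs)
     (\<lambda>z e. (1 - fst z) * from_sphere (to_sphere (snd z)) e + fst z * snd z e)"
    (is "continuous_map (prod_topology ?I ?D) ?D ?H")
proof (rule continuous_map_into_realization)
  fix e
  have "continuous_map ?D euclideanreal (\<lambda>x. from_sphere (to_sphere x) e)"
    using continuous_map_compose[OF continuous_map_compose[OF continuous_map_to_sphere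
        continuous_map_from_sphere] continuous_map_arc_value]
    by (simp add: o_def)
  then have "continuous_map (prod_topology ?I ?D) euclideanreal
      (\<lambda>z. from_sphere (to_sphere (snd z)) e)"
    using continuous_map_compose[OF continuous_map_snd] by (fastforce simp: o_def)
  moreover have "continuous_map (prod_topology ?I ?D) euclideanreal (\<lambda>z. snd z e)"
    using continuous_map_compose[OF continuous_map_snd continuous_map_arc_value]
    by (simp add: o_def)
  moreover have "continuous_map (prod_topology ?I ?D) euclideanreal fst"
    using continuous_map_fst continuous_map_in_subtopology by metis
  ultimately show "continuous_map (prod_topology ?I ?D) euclideanreal (\<lambda>z. ?H z e)"
    by (intro continuous_intros)
next
  fix z
  assume "z \<in> topspace (prod_topology ?I ?D)"
  then show "?H z \<in> points"
    using segment_in_points by (auto simp: realization_eq)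
qed

theorem realization_homotopy_equivalent_sphere:
  "forest_complex_realization arcs homotopy_equivalent_space nsphere (n - 1)"
  unfolding homotopy_equivalent_space_def
proof (intro exI conjI)
  let ?D = "forest_complex_realization arcs"
  show to_cont: "continuous_map ?D (nsphere (n - 1)) to_sphere"
    by (rule continuous_map_to_sphere)
  show from_cont: "continuous_map (nsphere (n - 1)) ?D from_sphere"
    by (rule continuous_map_from_sphere)
  show "homotopic_with (\<lambda>x. True) (nsphere (n - 1)) (nsphere (n - 1)) (to_sphere \<circ> from_sphere) id"
    by (rule homotopic_with_equal)
      (use continuous_map_compose[OF from_cont to_cont] to_sphere_from_sphere in auto)
  show "homotopic_with (\<lambda>x. True) ?D ?D (from_sphere \<circ> to_sphere) id"
    unfolding homotopic_with[of ?D "\<lambda>x. True", simplified]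
    using continuous_map_straight_line_homotopy by (intro exI) auto
qed

end

lemma single_edge_corona:
  assumes simple: "simple_graph V E" and "graph_connected V E" "card V = 2"
  obtains W p \<nu> where "corona V E W p 1 \<nu>"
proof -
  obtain a b where V: "V = {a, b}" "a \<noteq> b"
    using assms(3) by (meson card_2_iff)
  have "(a, b) \<in> {(x, y). adj E x y}\<^sup>*"
    using assms(2) V unfolding graph_connected_def by simp
  then obtain c where "adj E a c"
    by (rule converse_rtranclE) (use V(2) in auto)
  then have ab: "adj E a b"
    using adj_in_vertices(2)[OF simple] V by (auto simp: adj_def)
  define p where "p v = (if v = a then b else a)" for v
  have "corona V E {a} p 1 (\<lambda>_. a)"
  proof
    show "bij_betw (\<lambda>_. a) {..<1::nat} {a}"
      by (auto simp: bij_betw_def inj_on_def)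
    fix v
    assume v: "v \<in> V"
    show "p v \<in> V" "p (p v) = v" "v \<in> {a} \<longleftrightarrow> p v \<notin> {a}"
      using V v by (auto simp: p_def)
    show "adj E v (p v)"
      using V v ab adj_sym by (auto simp: p_def)
    fix u
    assume "v \<notin> {a}" "adj E u v"
    then show "u = p v"
      using V v adj_in_vertices(1)[OF simple] by (auto simp: p_def adj_def)
  qed (use simple V in auto)
  then show ?thesis
    by (rule that)
qed

lemma basic_tree_unique_partner:
  assumes tree: "basic_tree V E" and "card V \<noteq> 2" and v: "v \<in> V"
  shows "\<exists>!u. u \<in> V \<and> adj E v u \<and> (is_leaf E v \<longleftrightarrow> \<not> is_leaf E u)"
proof (cases "is_leaf E v")
  case True
  have simple: "simple_graph V E" and connected: "graph_connected V E"
    using tree by (auto simp: basic_tree_def is_tree_def)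
  obtain u where u: "adj E v u" "\<And>u'. adj E v u' \<Longrightarrow> u' = u"
    using leaf_unique_neighbour[OF simple True] by blast
  have "\<not> is_leaf E u"
  proof
    assume "is_leaf E u"
    then have "V \<subseteq> {u, v}"
      using connected_adjacent_leaves[OF simple connected v] True adj_sym[OF u(1)] by blast
    moreover have "finite V"
      using simple by (simp add: simple_graph_def)
    moreover have "card {u, v} \<le> 2"
      by (simp add: card_insert_if)
    ultimately have "card V \<le> 2"
      using card_mono[of "{u, v}" V] by simp
    moreover have "even (card V)"
      using assms(2) tree by (auto simp: basic_tree_def)
    moreover have "card V > 0"
      using \<open>finite V\<close> v card_gt_0_iff by blast
    ultimately show False
      using assms(2) by presburger
  qed
  then show ?thesis
    using True u adj_in_vertices(2)[OF simple u(1)] by blast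
next
  case False
  have "\<forall>w\<in>V. \<not> is_leaf E w \<longrightarrow> card {u\<in>V. is_leaf E u \<and> adj E w u} = 1"
    using tree assms(2) unfolding basic_tree_def by blast
  then obtain u where u: "{u\<in>V. is_leaf E u \<and> adj E v u} = {u}"
    using v False card_1_singletonE by blast
  show ?thesis
  proof (rule ex1I[of _ u])
    show "u \<in> V \<and> adj E v u \<and> (is_leaf E v \<longleftrightarrow> \<not> is_leaf E u)"
      using u False by blast
    show "u' = u" if "u' \<in> V \<and> adj E v u' \<and> (is_leaf E v \<longleftrightarrow> \<not> is_leaf E u')" for u'
      using that u False by blast
  qed
qed

lemma basic_tree_corona:
  assumes tree: "basic_tree V E" and card_V: "card V = 2 * n" and "n \<ge> 1"
  obtains W p \<nu> where "corona V E W p n \<nu>"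
proof (cases "card V = 2")
  case True
  then have "n = 1"
    using card_V by simp
  then show ?thesis
    using single_edge_corona[of V E] tree True that by (auto simp: basic_tree_def is_tree_def)
next
  case False
  have simple: "simple_graph V E"
    using tree by (simp add: basic_tree_def is_tree_def)
  define W where "W = {v \<in> V. \<not> is_leaf E v}"
  define partner where "partner v u \<longleftrightarrow> u \<in> V \<and> adj E v u \<and> (is_leaf E v \<longleftrightarrow> \<not> is_leaf E u)" for v u
  define p where "p v = (THE u. partner v u)" for v
  have partner_p: "partner v (p v)" if "v \<in> V" for v
    unfolding p_def partner_def by (rule theI'[OF basic_tree_unique_partner[OF tree False that]])
  have partner_unique: "u = p v" if "v \<in> V" "partner v u" for u v
    using basic_tree_unique_partner[OF tree False that(1)] partner_p[OF that(1)] that(2)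
    unfolding partner_def by blast
  have "card W = n"
    using tree False card_V unfolding basic_tree_def W_def by auto
  moreover have "finite W"
    using simple by (simp add: simple_graph_def W_def)
  ultimately obtain \<nu> where \<nu>: "bij_betw \<nu> {..<n} W"
    using ex_bij_betw_nat_finite[of W] by (auto simp: atLeast0LessThan)
  have "corona V E W p n \<nu>"
  proof
    fix v
    assume v: "v \<in> V"
    show pv: "p v \<in> V" and "adj E v (p v)" and "v \<in> W \<longleftrightarrow> p v \<notin> W"
      using partner_p[OF v] v by (auto simp: partner_def W_def)
    have "partner (p v) v"
      using partner_p[OF v] v adj_sym[of E v "p v"] by (auto simp: partner_def)
    then show "p (p v) = v"
      using partner_unique[OF pv] by simp
    fix u
    assume "v \<notin> W" "adj E u v"
    then have "is_leaf E v" "adj E v u"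
      using v adj_sym by (auto simp: W_def)
    then show "u = p v"
      using leaf_unique_neighbour[OF simple] \<open>adj E v (p v)\<close> by blast
  qed (use simple \<nu> \<open>n \<ge> 1\<close> in \<open>auto simp: W_def\<close>)
  then show ?thesis
    by (rule that)
qed

theorem mainTheorem10:
  fixes V :: "'a set" and E :: "'a set set" and n :: nat
  assumes "n \<ge> 1"
    and "basic_tree V E"
    and "card V = 2 * n"
  shows "forest_complex_realization (doubled_arcs E)
           homotopy_equivalent_space nsphere (n - 1)"
proof -
  obtain W p \<nu> where "corona V E W p n \<nu>"
    using basic_tree_corona[OF assms(2,3,1)] .
  then show ?thesis
    by (rule corona.realization_homotopy_equivalent_sphere)
qed

end
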